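(* The assignment $\mathrm{L}:\mathbf{TArb}\to\mathbf{FinArb}^<_\star$ (defined below) is a well-defined functor: for every object $G$ of $\mathbf{TArb}$, $\mathrm{L}(G)$ is a finite edge-ordered arborescence, and for every morphism $h:G\to H$ of $\mathbf{TArb}$, $\mathrm{L}(h)$ is a homomorphism of pointed edge-ordered graphs $\mathrm{L}(G)\to\mathrm{L}(H)$; moreover $\mathrm{L}$ preserves identities and composition.
   Context: A (directed) graph is $(V,\to)$ with $\to\subseteq V\times V$; $N(u)$ is the set of outgoing edges of $u$. A pointed graph has a distinguished vertex $v_0$; connected means every vertex is reachable by a path from $v_0$. A path is a finite sequence $v_1\to\cdots\to v_n$ of vertices joined by edges, with length $|\pi|$; co-initial paths share their source; $\pi\sqsubset\sigma$ means $\pi$ is a proper prefix of $\sigma$. A finite edge-ordered graph is a finite graph with a strict linear order $\triangleleft$ on each neighborhood. Lexicographic path order: if $\pi\sqsubset\sigma$ then $\pi\prec\sigma$ (symmetrically); otherwise, with $\zeta$ the longest common prefix, $u$ its target and $v_1,v_2$ the next vertices, $\pi\prec\sigma$ iff $u\to v_1\triangleleft u\to v_2$. Shortlex: $\pi\prec^s\sigma$ iff $|\pi|<|\sigma|$ or ($|\pi|=|\sigma|$ and $\pi\prec\sigma$). A homomorphism of finite pointed edge-ordered graphs $h:G\to H$ is a vertex map with (i) $u\to v$ implies $h(u)\to h(v)$; (ii) the distinguished vertex of $G$ is the unique vertex mapped to the distinguished vertex of $H$; (iii) $u\to v_1\triangleleft u\to v_2$ implies $h(u)\to h(v_1)\triangleleft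 h(u)\to h(v_2)$. An arborescence is a pointed graph with a unique path $v_0\rightsquigarrow u$ for every $u$. $\mathbf{FinArb}^<_\star$: finite edge-ordered arborescences with homomorphisms of pointed edge-ordered graphs. $\mathbf{TArb}$: objects are finite, pointed, connected, edge-ordered graphs $G$ for which there is a finite, connected, pointed, edge-ordered arborescence $T$ on the same vertices with the same distinguished point such that the edge relation of $G$ is the transitive closure of that of $T$ and $u\to v_1\triangleleft u\to v_2$ in $G$ iff $(v_0\rightsquigarrow v_1)\prec^s(v_0\rightsquigarrow v_2)$ for the unique paths in $T$; in such $G$ longest paths $u\rightsquigarrow v$ are unique. Morphisms of $\mathbf{TArb}$ are homomorphisms satisfying (i)–(iii) that map the longest path $u\rightsquigarrow v$ to the longest path $h(u)\rightsquigarrow h(v)$. $\mathrm{L}(G)$ has the vertices and distinguished point of $G$, contains an edge $u\to v$ iff it lies on the longest path $v_0\rightsquigarrow v$ in $G$, with neighborhood order inherited from $G$; $\mathrm{L}(h)(v)=h(v)$. *)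

theory Defs
  imports Main
begin

text \<open>A finite pointed edge-ordered graph: vertex set, edge relation, distinguished
  vertex, and for every vertex u a relation eord u v1 v2 meaning (u->v1) precedes (u->v2).\<close>

record 'a eograph =
  verts :: "'a set"
  arcs  :: "('a \<times> 'a) set"
  root  :: 'a
  eord  :: "'a \<Rightarrow> 'a \<Rightarrow> 'a \<Rightarrow> bool"

definition nbhd :: "('a, 'b) eograph_scheme \<Rightarrow> 'a \<Rightarrow> 'a set" where
  "nbhd G u = {v. (u, v) \<in> arcs G}"

definition wf_eog :: "('a, 'b) eograph_scheme \<Rightarrow> bool" where
  "wf_eog G \<longleftrightarrow> finite (verts G) \<and> arcs G \<subseteq> verts G \<times> verts G \<and> root G \<in> verts G \<and>
     (\<forall>u v1 v2. eord G u v1 v2 \<longrightarrow> v1 \<in> nbhd G u \<and> v2 \<in> nbhd G u) \<and>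
     (\<forall>u v. \<not> eord G u v v) \<and>
     (\<forall>u v1 v2 v3. eord G u v1 v2 \<longrightarrow> eord G u v2 v3 \<longrightarrow> eord G u v1 v3) \<and>
     (\<forall>u v1 v2. v1 \<in> nbhd G u \<longrightarrow> v2 \<in> nbhd G u \<longrightarrow> v1 \<noteq> v2 \<longrightarrow>
                eord G u v1 v2 \<or> eord G u v2 v1)"

text \<open>Paths are nonempty vertex lists with consecutive vertices joined by edges;
  the length of a path p is length p - 1.\<close>
definition is_path :: "('a, 'b) eograph_scheme \<Rightarrow> 'a list \<Rightarrow> bool" where
  "is_path G p \<longleftrightarrow> p \<noteq> [] \<and> set p \<subseteq> verts G \<and> (\<forall>(x, y) \<in> set (zip p (tl p)). (x, y) \<in> arcs G)"

definition path_from_to :: "('a, 'b) eograph_scheme \<Rightarrow> 'a \<Rightarrow> 'a \<Rightarrow> 'a list \<Rightarrow> bool" where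
  "path_from_to G u v p \<longleftrightarrow> is_path G p \<and> hd p = u \<and> last p = v"

definition connected_eog :: "('a, 'b) eograph_scheme \<Rightarrow> bool" where
  "connected_eog G \<longleftrightarrow> (\<forall>v \<in> verts G. \<exists>p. path_from_to G (root G) v p)"

definition arborescence :: "('a, 'b) eograph_scheme \<Rightarrow> bool" where
  "arborescence G \<longleftrightarrow> root G \<in> verts G \<and> (\<forall>v \<in> verts G. \<exists>!p. path_from_to G (root G) v p)"

definition lex_less :: "('a, 'b) eograph_scheme \<Rightarrow> 'a list \<Rightarrow> 'a list \<Rightarrow> bool" where
  "lex_less G p q \<longleftrightarrow> (\<exists>r. r \<noteq> [] \<and> q = p @ r) \<or>
     (\<not> (\<exists>r. r \<noteq> [] \<and> p = q @ r) \<and>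
      (\<exists>z v1 v2 r1 r2. p = z @ v1 # r1 \<and> q = z @ v2 # r2 \<and> z \<noteq> [] \<and> v1 \<noteq> v2 \<and>
                       eord G (last z) v1 v2))"

definition shortlex_less :: "('a, 'b) eograph_scheme \<Rightarrow> 'a list \<Rightarrow> 'a list \<Rightarrow> bool" where
  "shortlex_less G p q \<longleftrightarrow> length p < length q \<or> (length p = length q \<and> lex_less G p q)"

definition longest_path :: "('a, 'b) eograph_scheme \<Rightarrow> 'a \<Rightarrow> 'a \<Rightarrow> 'a list \<Rightarrow> bool" where
  "longest_path G u v p \<longleftrightarrow> path_from_to G u v p \<and>
     (\<forall>q. path_from_to G u v q \<longrightarrow> length q \<le> length p)"

definition eo_hom :: "('a, 'c) eograph_scheme \<Rightarrow> ('b, 'd) eograph_scheme \<Rightarrow> ('a \<Rightarrow> 'b) \<Rightarrow> bool" where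
  "eo_hom G H h \<longleftrightarrow> (\<forall>v \<in> verts G. h v \<in> verts H) \<and>
     (\<forall>u v. (u, v) \<in> arcs G \<longrightarrow> (h u, h v) \<in> arcs H) \<and>
     (\<forall>v \<in> verts G. h v = root H \<longleftrightarrow> v = root G) \<and>
     (\<forall>u v1 v2. eord G u v1 v2 \<longrightarrow> eord H (h u) (h v1) (h v2))"

definition finarb_obj :: "('a, 'b) eograph_scheme \<Rightarrow> bool" where
  "finarb_obj G \<longleftrightarrow> wf_eog G \<and> arborescence G"

definition tarb_obj :: "'a eograph \<Rightarrow> bool" where
  "tarb_obj G \<longleftrightarrow> wf_eog G \<and> connected_eog G \<and>
     (\<exists>T :: 'a eograph. wf_eog T \<and> connected_eog T \<and> arborescence T \<and>
        verts T = verts G \<and> root T = root G \<and> arcs G = (arcs T)\<^sup>+ \<and>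
        (\<forall>u v1 v2. (u, v1) \<in> arcs G \<longrightarrow> (u, v2) \<in> arcs G \<longrightarrow>
           (eord G u v1 v2 \<longleftrightarrow>
             (\<forall>p1 p2. path_from_to T (root T) v1 p1 \<longrightarrow> path_from_to T (root T) v2 p2 \<longrightarrow>
                shortlex_less T p1 p2))))"

definition tarb_mor :: "'a eograph \<Rightarrow> 'b eograph \<Rightarrow> ('a \<Rightarrow> 'b) \<Rightarrow> bool" where
  "tarb_mor G H h \<longleftrightarrow> tarb_obj G \<and> tarb_obj H \<and> eo_hom G H h \<and>
     (\<forall>u v p. longest_path G u v p \<longrightarrow> longest_path H (h u) (h v) (map h p))"

definition L_obj :: "'a eograph \<Rightarrow> 'a eograph" where
  "L_obj G = \<lparr> verts = verts G,
     arcs = {(u, v). \<exists>p. longest_path G (root G) v p \<and> (u, v) \<in> set (zip p (tl p))},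
     root = root G,
     eord = (\<lambda>u v1 v2. eord G u v1 v2 \<and>
        (\<exists>p. longest_path G (root G) v1 p \<and> (u, v1) \<in> set (zip p (tl p))) \<and>
        (\<exists>p. longest_path G (root G) v2 p \<and> (u, v2) \<in> set (zip p (tl p)))) \<rparr>"

definition L_mor :: "('a \<Rightarrow> 'b) \<Rightarrow> ('a \<Rightarrow> 'b)" where
  "L_mor h = h"

end

theory Submission
  imports Defs
begin

text \<open>If the edge relation of \<open>G\<close> is the transitive closure of that of a tree \<open>T\<close>, every path
  of \<open>G\<close> refines to a path of \<open>T\<close> by subdividing each edge into a chain of tree edges, and the
  refinement is strictly longer unless the path already was a tree path. As root paths in \<open>T\<close>
  are unique, the longest path from the root to \<open>v\<close> in \<open>G\<close> is the tree path, so \<open>L(G)\<close> is \<open>T\<close>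
  with the edge order of \<open>G\<close> restricted to it. Morphisms of \<open>TArb\<close> preserve longest paths, hence
  the edges of \<open>L(G)\<close>, and \<open>L\<close> is the identity on maps.\<close>

lemma ball_set_zip_tl_iff_successively:
  "(\<forall>(x, y) \<in> set (zip p (tl p)). R x y) \<longleftrightarrow> successively R p"
  by (induction R p rule: successively.induct) auto

lemma is_path_iff_successively:
  "is_path G p \<longleftrightarrow> p \<noteq> [] \<and> set p \<subseteq> verts G \<and> successively (\<lambda>a b. (a, b) \<in> arcs G) p"
  unfolding is_path_def ball_set_zip_tl_iff_successively by simp

lemma successively_set_subset:
  assumes "successively (\<lambda>a b. (a, b) \<in> E) xs" "E \<subseteq> V \<times> V" "hd xs \<in> V"
  shows "set xs \<subseteq> V"
  using assms by (induction xs) (auto simp: successively_Cons)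

lemma last_arc_in_set_zip_tl:
  "xs \<noteq> [] \<Longrightarrow> (last xs, y) \<in> set (zip (xs @ [y]) (tl (xs @ [y])))"
  by (induction xs rule: induct_list012) auto

lemma set_zip_tl_map:
  "set (zip (map h p) (tl (map h p))) = (\<lambda>(a, b). (h a, h b)) ` set (zip p (tl p))"
  by (simp add: map_tl[symmetric] zip_map_map)

lemma successively_append_overlap:
  "successively P (xs @ [y]) \<Longrightarrow> successively P (y # ys) \<Longrightarrow> successively P (xs @ y # ys)"
  by (induction xs rule: induct_list012) (auto simp: successively_Cons)

lemma trancl_imp_successively:
  "(x, y) \<in> r\<^sup>+ \<Longrightarrow> \<exists>zs. successively (\<lambda>a b. (a, b) \<in> r) (x # zs @ [y])"
proof (induction rule: trancl_induct)
  case (base y)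
  then show ?case by (intro exI[of _ "[]"]) auto
next
  case (step y z)
  then obtain zs where "successively (\<lambda>a b. (a, b) \<in> r) (x # zs @ [y])" by blast
  with step.hyps(2) have "successively (\<lambda>a b. (a, b) \<in> r) ((x # zs @ [y]) @ [z])"
    by (simp only: successively_append_iff) simp
  then show ?case by (intro exI[of _ "zs @ [y]"]) simp
qed

lemma successively_trancl_refine:
  assumes "successively (\<lambda>a b. (a, b) \<in> r\<^sup>+) q"
  shows "\<exists>q'. successively (\<lambda>a b. (a, b) \<in> r) q' \<and> hd q' = hd q \<and> last q' = last q \<and>
    (q' = q \<or> length q < length q')"
  using assms
proof (induction q rule: induct_list012)
  case 1
  show ?case by (intro exI[of _ "[]"]) simp
next
  case (2 x)
  show ?case by (intro exI[of _ "[x]"]) simp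
next
  case (3 x y rest)
  then obtain q'' where q'': "successively (\<lambda>a b. (a, b) \<in> r) q''" "hd q'' = y"
    "last q'' = last (y # rest)" "q'' = y # rest \<or> length (y # rest) < length q''"
    by auto
  from 3 obtain zs where zs: "successively (\<lambda>a b. (a, b) \<in> r) (x # zs @ [y])"
    using trancl_imp_successively by fastforce
  have "q'' \<noteq> []" using q''(4) by auto
  with q'' zs have "successively (\<lambda>a b. (a, b) \<in> r) (x # zs @ q'')"
    using successively_append_overlap[of _ "x # zs" y "tl q''"] by (cases q'') auto
  moreover have "x # zs @ q'' = x # y # rest \<or> length (x # y # rest) < length (x # zs @ q'')"
    using q''(4) by (cases zs) auto
  ultimately show ?case using q'' \<open>q'' \<noteq> []\<close> by (intro exI[of _ "x # zs @ q''"]) auto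
qed

lemma root_path_arcs_eq:
  assumes "connected_eog T" "arcs T \<subseteq> verts T \<times> verts T"
  shows "{(u, v). \<exists>p. path_from_to T (root T) v p \<and> (u, v) \<in> set (zip p (tl p))} = arcs T"
proof (intro equalityI subsetI; clarify)
  fix u v p assume "path_from_to T (root T) v p" "(u, v) \<in> set (zip p (tl p))"
  then show "(u, v) \<in> arcs T" unfolding path_from_to_def is_path_def by blast
next
  fix u v assume uv: "(u, v) \<in> arcs T"
  with assms obtain p where p: "path_from_to T (root T) u p"
    unfolding connected_eog_def by blast
  then have "p \<noteq> []" "last p = u" unfolding path_from_to_def is_path_def by auto
  have "path_from_to T (root T) v (p @ [v])"
    using p uv assms(2) \<open>p \<noteq> []\<close> \<open>last p = u\<close>
    unfolding path_from_to_def is_path_iff_successively by (auto simp: successively_append_iff)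
  moreover have "(u, v) \<in> set (zip (p @ [v]) (tl (p @ [v])))"
    using last_arc_in_set_zip_tl[OF \<open>p \<noteq> []\<close>] \<open>last p = u\<close> by simp
  ultimately show "\<exists>p. path_from_to T (root T) v p \<and> (u, v) \<in> set (zip p (tl p))" by blast
qed

lemma wf_eog_restrict_arcs:
  assumes "wf_eog G" "verts G' = verts G" "root G' = root G" "arcs G' \<subseteq> arcs G"
    and "\<And>u v1 v2. eord G' u v1 v2 \<longleftrightarrow> eord G u v1 v2 \<and> (u, v1) \<in> arcs G' \<and> (u, v2) \<in> arcs G'"
  shows "wf_eog G'"
proof -
  have nbhd_sub: "nbhd G' u \<subseteq> nbhd G u" for u
    using assms(4) unfolding nbhd_def by blast
  have eord_iff: "eord G' u v1 v2 \<longleftrightarrow> eord G u v1 v2 \<and> v1 \<in> nbhd G' u \<and> v2 \<in> nbhd G' u"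
    for u v1 v2
    using assms(5) unfolding nbhd_def by simp
  obtain fin: "finite (verts G)" and arcs_sub: "arcs G \<subseteq> verts G \<times> verts G"
    and root_in: "root G \<in> verts G"
    and irrefl: "\<forall>u v. \<not> eord G u v v"
    and trans: "\<forall>u v1 v2 v3. eord G u v1 v2 \<longrightarrow> eord G u v2 v3 \<longrightarrow> eord G u v1 v3"
    and total: "\<forall>u v1 v2. v1 \<in> nbhd G u \<longrightarrow> v2 \<in> nbhd G u \<longrightarrow> v1 \<noteq> v2 \<longrightarrow>
      eord G u v1 v2 \<or> eord G u v2 v1"
    using assms(1) unfolding wf_eog_def by (elim conjE)
  show ?thesis
    unfolding wf_eog_def
  proof (intro conjI)
    show "arcs G' \<subseteq> verts G' \<times> verts G'"
      using assms(2,4) arcs_sub by auto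
    show "\<forall>u v1 v2 v3. eord G' u v1 v2 \<longrightarrow> eord G' u v2 v3 \<longrightarrow> eord G' u v1 v3"
      using trans unfolding eord_iff by blast
    show "\<forall>u v1 v2. v1 \<in> nbhd G' u \<longrightarrow> v2 \<in> nbhd G' u \<longrightarrow> v1 \<noteq> v2 \<longrightarrow>
        eord G' u v1 v2 \<or> eord G' u v2 v1"
      using total nbhd_sub unfolding eord_iff by blast
  qed (use assms(2,3) fin root_in irrefl in \<open>auto simp: eord_iff\<close>)
qed

lemma verts_L_obj [simp]: "verts (L_obj G) = verts G"
  and root_L_obj [simp]: "root (L_obj G) = root G"
  by (simp_all add: L_obj_def)

lemma arcs_L_obj:
  "(u, v) \<in> arcs (L_obj G) \<longleftrightarrow> (\<exists>p. longest_path G (root G) v p \<and> (u, v) \<in> set (zip p (tl p)))"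
  by (simp add: L_obj_def)

lemma eord_L_obj:
  "eord (L_obj G) u v1 v2 \<longleftrightarrow> eord G u v1 v2 \<and> (u, v1) \<in> arcs (L_obj G) \<and> (u, v2) \<in> arcs (L_obj G)"
  by (simp add: L_obj_def)

locale transitive_closure_of_tree =
  fixes G :: "'a eograph" and T :: "('a, 'b) eograph_scheme"
  assumes tree: "arborescence T"
    and tree_arcs: "arcs T \<subseteq> verts T \<times> verts T"
    and verts_eq: "verts T = verts G"
    and root_eq: "root T = root G"
    and arcs_eq: "arcs G = (arcs T)\<^sup>+"
begin

lemma tree_path_is_path: "path_from_to T u v p \<Longrightarrow> path_from_to G u v p"
  unfolding path_from_to_def is_path_iff_successively
  by (auto simp: verts_eq arcs_eq elim!: successively_mono)

lemma tree_root_path_unique: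
  "path_from_to T (root G) v p \<Longrightarrow> path_from_to T (root G) v q \<Longrightarrow> p = q"
  using tree unfolding arborescence_def root_eq
  by (metis last_in_set path_from_to_def is_path_def subsetD)

lemma path_refines_to_tree_path:
  assumes "path_from_to G u v q"
  shows "\<exists>q'. path_from_to T u v q' \<and> (q' = q \<or> length q < length q')"
proof -
  from assms have chain: "successively (\<lambda>a b. (a, b) \<in> (arcs T)\<^sup>+) q"
    and "q \<noteq> []" "u \<in> verts T"
    unfolding path_from_to_def is_path_iff_successively arcs_eq verts_eq by auto
  moreover obtain q' where "successively (\<lambda>a b. (a, b) \<in> arcs T) q'" "hd q' = hd q"
    "last q' = last q" "q' = q \<or> length q < length q'"
    using successively_trancl_refine[OF chain] by blast
  ultimately show ?thesis
    using assms successively_set_subset[OF _ tree_arcs]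
    unfolding path_from_to_def is_path_iff_successively by (intro exI[of _ q']) auto
qed

lemma longest_root_path_iff_tree_path:
  "longest_path G (root G) v p \<longleftrightarrow> path_from_to T (root G) v p"
proof
  assume p: "longest_path G (root G) v p"
  then obtain q where q: "path_from_to T (root G) v q" "q = p \<or> length p < length q"
    unfolding longest_path_def using path_refines_to_tree_path by blast
  then have "length q \<le> length p"
    using p tree_path_is_path unfolding longest_path_def by blast
  with q show "path_from_to T (root G) v p" by auto
next
  assume p: "path_from_to T (root G) v p"
  have "length q \<le> length p" if "path_from_to G (root G) v q" for q
    using path_refines_to_tree_path[OF that] tree_root_path_unique[OF p] by fastforce
  with p tree_path_is_path show "longest_path G (root G) v p"
    unfolding longest_path_def by blast
qed

lemma arcs_L_obj_eq: "arcs (L_obj G) = arcs T"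
proof -
  have "connected_eog T"
    using tree unfolding arborescence_def connected_eog_def by blast
  have "arcs (L_obj G) = {(u, v). \<exists>p. path_from_to T (root T) v p \<and> (u, v) \<in> set (zip p (tl p))}"
    by (auto simp: arcs_L_obj longest_root_path_iff_tree_path root_eq)
  also have "\<dots> = arcs T"
    using \<open>connected_eog T\<close> tree_arcs by (rule root_path_arcs_eq)
  finally show ?thesis .
qed

lemma finarb_obj_L_obj:
  assumes "wf_eog G"
  shows "finarb_obj (L_obj G)"
proof -
  have "path_from_to (L_obj G) = path_from_to T"
    by (intro ext) (simp add: path_from_to_def is_path_def arcs_L_obj_eq verts_eq)
  then have "arborescence (L_obj G)"
    using tree unfolding arborescence_def by (simp add: verts_eq root_eq)
  moreover have "wf_eog (L_obj G)"
    using assms by (rule wf_eog_restrict_arcs) (auto simp: arcs_L_obj_eq arcs_eq eord_L_obj)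
  ultimately show ?thesis unfolding finarb_obj_def by blast
qed

end

lemma eo_hom_L_obj:
  assumes hom: "eo_hom G H h" and "root G \<in> verts G"
    and longest: "\<And>v p. longest_path G (root G) v p \<Longrightarrow> longest_path H (h (root G)) (h v) (map h p)"
  shows "eo_hom (L_obj G) (L_obj H) h"
proof -
  have "h (root G) = root H" using hom assms(2) unfolding eo_hom_def by blast
  then have "(h u, h v) \<in> arcs (L_obj H)" if "(u, v) \<in> arcs (L_obj G)" for u v
    using that longest by (fastforce simp: arcs_L_obj set_zip_tl_map)
  with hom show ?thesis unfolding eo_hom_def by (simp add: eord_L_obj)
qed

theorem lemma10p7:
  shows "(\<forall>G :: 'a eograph. tarb_obj G \<longrightarrow> finarb_obj (L_obj G)) \<and>
    (\<forall>(G :: 'a eograph) (H :: 'b eograph) h. tarb_mor G H h \<longrightarrow>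
        eo_hom (L_obj G) (L_obj H) (L_mor h)) \<and>
    (\<forall>G :: 'a eograph. tarb_obj G \<longrightarrow> (\<forall>v \<in> verts (L_obj G). L_mor id v = v)) \<and>
    (\<forall>(G :: 'a eograph) (H :: 'b eograph) (K :: 'c eograph) h k.
        tarb_mor G H h \<longrightarrow> tarb_mor H K k \<longrightarrow>
        (\<forall>v \<in> verts (L_obj G). L_mor (k \<circ> h) v = (L_mor k \<circ> L_mor h) v))"
proof (intro conjI allI impI)
  fix G :: "'a eograph" assume "tarb_obj G"
  then obtain T :: "'a eograph" where "wf_eog G" "wf_eog T" "arborescence T"
    "verts T = verts G" "root T = root G" "arcs G = (arcs T)\<^sup>+"
    unfolding tarb_obj_def by blast
  then interpret transitive_closure_of_tree G T by unfold_locales (auto simp: wf_eog_def)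
  show "finarb_obj (L_obj G)" using \<open>wf_eog G\<close> by (rule finarb_obj_L_obj)
next
  fix G :: "'a eograph" and H :: "'b eograph" and h assume "tarb_mor G H h"
  then have "eo_hom G H h" "root G \<in> verts G"
    and "\<forall>u v p. longest_path G u v p \<longrightarrow> longest_path H (h u) (h v) (map h p)"
    unfolding tarb_mor_def tarb_obj_def wf_eog_def by blast+
  then show "eo_hom (L_obj G) (L_obj H) (L_mor h)"
    unfolding L_mor_def by (blast intro: eo_hom_L_obj)
qed (simp_all add: L_mor_def)

end
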